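(* Let $\mathbf{C}$ and $\mathbf{D}$ be chain complexes of finite-dimensional real inner product spaces (concentrated in degrees $n\ge 0$), and let $\Phi:\mathbf{D}\to\mathbf{C}$, $\Psi:\mathbf{C}\to\mathbf{D}$ be chain maps together with a chain homotopy $h$ forming a deformation retract, i.e. $\Psi\Phi=\mathrm{id}_{\mathbf{D}}$ and $\partial h+h\partial=\mathrm{id}_{\mathbf{C}}-\Phi\Psi$. Then there exist a base of $\mathbf{C}$ and a Morse matching $\mathcal{M}$ on the resulting based chain complex such that the deformation retract $(\Psi,\Phi)$ is equivalent to the Morse retraction $(\Psi^{\mathcal{M}},\Phi^{\mathcal{M}})$ of $\mathcal{M}$ (a deformation retract $\mathbf{C}^{\mathcal M}\rightleftarrows\mathbf{C}$ of the same complex $\mathbf{C}$).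
   Context: A based chain complex of finite type over $\mathbb{R}$ is a chain complex $(\mathbf{C},\partial)$ of finite-dimensional real vector spaces $\mathbf{C}_n$, $n\ge0$, with pairwise disjoint finite index sets $I=\{I_n\}$ and a direct sum decomposition $\mathbf{C}_n=\bigoplus_{\alpha\in I_n}C_\alpha$ (elements of $I_n$ are called $n$-cells). For $\alpha\in I_n,\beta\in I_{n-1}$ let $\partial_{\beta,\alpha}=\pi_\beta\circ\partial_n\circ i_\alpha:C_\alpha\to C_\beta$, with $i_\alpha$ the inclusion of a summand and $\pi_\beta$ the projection onto a summand along the others. The graph $\mathcal G(\mathbf C)$ has vertices $\bigcup_n I_n$ and an edge $\alpha\to\beta$ whenever $\partial_{\beta,\alpha}\ne0$. A Morse matching is a set $M$ of edges such that (1) every vertex lies on at most one edge of $M$; (2) $\partial_{\beta,\alpha}$ is an isomorphism for every $\alpha\to\beta$ in $M$; (3) for each $n$, the relation on $I_n$ given by $\alpha\succ\beta$ iff there is a directed path from $\alpha$ to $\beta$ in $\mathcal G(\mathbf C)^M$ (the graph with the edges of $M$ reversed) is a partial order. Unmatched cells are critical; their set is $M^0$. The index $\mathcal I(\gamma)$ of a directed path $\gamma=(\sigma_0,\dots,\sigma_m)$ in $\mathcal G(\mathbf C)^M$ is the composite of the maps of its steps, where a non-reversed step $\sigma_i\to\sigma_{i+1}$ contributes $\partial_{\sigma_{i+1},\sigma_i}$ and a reversed matched edge contributes $-\partial_{\sigma_i,\sigma_{i+1}}^{-1}$ (the trivial path gives the identity); $\Gamma_{\beta,\alpha}=\sum_\gamma\mathcal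 I(\gamma):C_\alpha\to C_\beta$ over all paths from $\alpha$ to $\beta$ (zero if none). The Morse complex is $\mathbf C^M_n=\bigoplus_{\alpha\in I_n\cap M^0}C_\alpha$ with boundary $x\mapsto\sum_{\beta\in M^0\cap I_{n-1}}\Gamma_{\beta,\alpha}(x)$ for $x\in C_\alpha$, $\alpha\in M^0\cap I_n$. The Morse retraction consists of the chain maps $\Phi^M:\mathbf C^M\to\mathbf C$, $\Phi^M(x)=\sum_{\beta\in I_n}\Gamma_{\beta,\alpha}(x)$ for $x\in C_\alpha$, $\alpha\in M^0\cap I_n$, and $\Psi^M:\mathbf C\to\mathbf C^M$, $\Psi^M(x)=\sum_{\beta\in M^0\cap I_n}\Gamma_{\beta,\alpha}(x)$ for $x\in C_\alpha$, $\alpha\in I_n$; it is a deformation retract. Two deformation retracts $(\Psi:\mathbf C\to\mathbf D,\Phi:\mathbf D\to\mathbf C)$ and $(\Psi':\mathbf C'\to\mathbf D',\Phi':\mathbf D'\to\mathbf C')$ are equivalent if there are chain isomorphisms $f:\mathbf D\to\mathbf D'$, $g:\mathbf C\to\mathbf C'$ with $f\Psi=\Psi' g$ and $g\Phi=\Phi' f$. *)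

theory Defs
  imports "HOL-Analysis.Inner_Product"
begin

definition lin_on :: "'a::real_vector set \<Rightarrow> ('a \<Rightarrow> 'b::real_vector) \<Rightarrow> bool" where
  "lin_on A f \<longleftrightarrow> (\<forall>x\<in>A. \<forall>y\<in>A. f (x + y) = f x + f y) \<and> (\<forall>c. \<forall>x\<in>A. f (c *\<^sub>R x) = c *\<^sub>R f x)"

definition fin_dim_subspace :: "'a::real_vector set \<Rightarrow> bool" where
  "fin_dim_subspace A \<longleftrightarrow> subspace A \<and> (\<exists>B. finite B \<and> A = span B)"

definition chain_complex :: "(nat \<Rightarrow> 'a::real_vector set) \<Rightarrow> (nat \<Rightarrow> 'a \<Rightarrow> 'a) \<Rightarrow> bool" where
  "chain_complex C d \<longleftrightarrow>
     (\<forall>n. fin_dim_subspace (C n)) \<and> (\<forall>n. lin_on (C n) (d n)) \<and>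
     (\<forall>n. \<forall>x\<in>C n. d n x \<in> C (n - 1)) \<and> (\<forall>x\<in>C 0. d 0 x = 0) \<and>
     (\<forall>n. \<forall>x\<in>C (Suc n). d n (d (Suc n) x) = 0)"

definition chain_map ::
  "(nat \<Rightarrow> 'a::real_vector set) \<Rightarrow> (nat \<Rightarrow> 'a \<Rightarrow> 'a) \<Rightarrow> (nat \<Rightarrow> 'b::real_vector set) \<Rightarrow> (nat \<Rightarrow> 'b \<Rightarrow> 'b)
   \<Rightarrow> (nat \<Rightarrow> 'a \<Rightarrow> 'b) \<Rightarrow> bool" where
  "chain_map C d D e f \<longleftrightarrow>
     (\<forall>n. lin_on (C n) (f n)) \<and> (\<forall>n. \<forall>x\<in>C n. f n x \<in> D n) \<and>
     (\<forall>n. \<forall>x\<in>C n. e n (f n x) = f (n - 1) (d n x))"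

definition chain_iso ::
  "(nat \<Rightarrow> 'a::real_vector set) \<Rightarrow> (nat \<Rightarrow> 'a \<Rightarrow> 'a) \<Rightarrow> (nat \<Rightarrow> 'b::real_vector set) \<Rightarrow> (nat \<Rightarrow> 'b \<Rightarrow> 'b)
   \<Rightarrow> (nat \<Rightarrow> 'a \<Rightarrow> 'b) \<Rightarrow> bool" where
  "chain_iso C d D e f \<longleftrightarrow> chain_map C d D e f \<and> (\<forall>n. bij_betw (f n) (C n) (D n))"

definition deformation_retract ::
  "(nat \<Rightarrow> 'a::real_vector set) \<Rightarrow> (nat \<Rightarrow> 'a \<Rightarrow> 'a) \<Rightarrow> (nat \<Rightarrow> 'b::real_vector set) \<Rightarrow> (nat \<Rightarrow> 'b \<Rightarrow> 'b)
   \<Rightarrow> (nat \<Rightarrow> 'a \<Rightarrow> 'b) \<Rightarrow> (nat \<Rightarrow> 'b \<Rightarrow> 'a) \<Rightarrow> (nat \<Rightarrow> 'a \<Rightarrow> 'a) \<Rightarrow> bool" where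
  "deformation_retract C d D e Psi Phi h \<longleftrightarrow>
     chain_map C d D e Psi \<and> chain_map D e C d Phi \<and>
     (\<forall>n. \<forall>y\<in>D n. Psi n (Phi n y) = y) \<and>
     (\<forall>n. lin_on (C n) (h n) \<and> (\<forall>x\<in>C n. h n x \<in> C (Suc n))) \<and>
     (\<forall>n. \<forall>x\<in>C n. d (Suc n) (h n x) + h (n - 1) (d n x) = x - Phi n (Psi n x))"

definition comps :: "'c set \<Rightarrow> ('c \<Rightarrow> 'a::real_vector set) \<Rightarrow> 'a \<Rightarrow> ('c \<Rightarrow> 'a) \<Rightarrow> bool" where
  "comps J S x c \<longleftrightarrow> (\<forall>\<alpha>\<in>J. c \<alpha> \<in> S \<alpha>) \<and> (\<forall>\<alpha>. \<alpha> \<notin> J \<longrightarrow> c \<alpha> = 0) \<and> x = (\<Sum>\<alpha>\<in>J. c \<alpha>)"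

definition direct_sum_decomp :: "'a::real_vector set \<Rightarrow> 'c set \<Rightarrow> ('c \<Rightarrow> 'a set) \<Rightarrow> bool" where
  "direct_sum_decomp A J S \<longleftrightarrow> finite J \<and> (\<forall>\<alpha>\<in>J. subspace (S \<alpha>) \<and> S \<alpha> \<subseteq> A) \<and>
     (\<forall>x\<in>A. \<exists>!c. comps J S x c)"

definition based_complex ::
  "(nat \<Rightarrow> 'a::real_vector set) \<Rightarrow> (nat \<Rightarrow> 'a \<Rightarrow> 'a) \<Rightarrow> (nat \<Rightarrow> 'c set) \<Rightarrow> ('c \<Rightarrow> 'a set) \<Rightarrow> bool" where
  "based_complex C d I S \<longleftrightarrow> chain_complex C d \<and> (\<forall>m n. m \<noteq> n \<longrightarrow> I m \<inter> I n = {}) \<and>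
     (\<forall>n. direct_sum_decomp (C n) (I n) S)"

definition deg :: "(nat \<Rightarrow> 'c set) \<Rightarrow> 'c \<Rightarrow> nat" where
  "deg I \<alpha> = (THE n. \<alpha> \<in> I n)"

definition proj :: "(nat \<Rightarrow> 'c set) \<Rightarrow> ('c \<Rightarrow> 'a::real_vector set) \<Rightarrow> 'c \<Rightarrow> 'a \<Rightarrow> 'a" where
  "proj I S \<beta> x = (THE c. comps (I (deg I \<beta>)) S x c) \<beta>"

definition bd :: "(nat \<Rightarrow> 'a \<Rightarrow> 'a) \<Rightarrow> (nat \<Rightarrow> 'c set) \<Rightarrow> ('c \<Rightarrow> 'a::real_vector set) \<Rightarrow> 'c \<Rightarrow> 'c \<Rightarrow> 'a \<Rightarrow> 'a" where
  "bd d I S \<beta> \<alpha> x = proj I S \<beta> (d (deg I \<alpha>) x)"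

definition edge :: "(nat \<Rightarrow> 'a \<Rightarrow> 'a) \<Rightarrow> (nat \<Rightarrow> 'c set) \<Rightarrow> ('c \<Rightarrow> 'a::real_vector set) \<Rightarrow> 'c \<Rightarrow> 'c \<Rightarrow> bool" where
  "edge d I S \<alpha> \<beta> \<longleftrightarrow> (\<exists>n. \<alpha> \<in> I (Suc n) \<and> \<beta> \<in> I n) \<and> (\<exists>x\<in>S \<alpha>. bd d I S \<beta> \<alpha> x \<noteq> 0)"

definition edgeM :: "(nat \<Rightarrow> 'a \<Rightarrow> 'a) \<Rightarrow> (nat \<Rightarrow> 'c set) \<Rightarrow> ('c \<Rightarrow> 'a::real_vector set) \<Rightarrow> ('c \<times> 'c) set \<Rightarrow> 'c \<Rightarrow> 'c \<Rightarrow> bool" where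
  "edgeM d I S M a b \<longleftrightarrow> (edge d I S a b \<and> (a, b) \<notin> M) \<or> (b, a) \<in> M"

definition pathsM :: "(nat \<Rightarrow> 'a \<Rightarrow> 'a) \<Rightarrow> (nat \<Rightarrow> 'c set) \<Rightarrow> ('c \<Rightarrow> 'a::real_vector set) \<Rightarrow> ('c \<times> 'c) set \<Rightarrow> 'c \<Rightarrow> 'c \<Rightarrow> 'c list set" where
  "pathsM d I S M a b = {xs. xs \<noteq> [] \<and> hd xs = a \<and> last xs = b \<and> successively (edgeM d I S M) xs}"

definition morse_matching :: "(nat \<Rightarrow> 'a \<Rightarrow> 'a) \<Rightarrow> (nat \<Rightarrow> 'c set) \<Rightarrow> ('c \<Rightarrow> 'a::real_vector set) \<Rightarrow> ('c \<times> 'c) set \<Rightarrow> bool" where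
  "morse_matching d I S M \<longleftrightarrow>
     (\<forall>(\<alpha>, \<beta>)\<in>M. edge d I S \<alpha> \<beta>) \<and>
     (\<forall>(\<alpha>, \<beta>)\<in>M. \<forall>(\<alpha>', \<beta>')\<in>M. (\<alpha> = \<alpha>' \<or> \<alpha> = \<beta>' \<or> \<beta> = \<alpha>' \<or> \<beta> = \<beta>') \<longrightarrow> (\<alpha>, \<beta>) = (\<alpha>', \<beta>')) \<and>
     (\<forall>(\<alpha>, \<beta>)\<in>M. bij_betw (bd d I S \<beta> \<alpha>) (S \<alpha>) (S \<beta>)) \<and>
     (\<forall>n. partial_order_on (I n) {(\<alpha>, \<beta>). \<alpha> \<in> I n \<and> \<beta> \<in> I n \<and> pathsM d I S M \<alpha> \<beta> \<noteq> {}})"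

definition critical :: "('c \<times> 'c) set \<Rightarrow> 'c \<Rightarrow> bool" where
  "critical M \<alpha> \<longleftrightarrow> \<alpha> \<notin> fst ` M \<and> \<alpha> \<notin> snd ` M"

definition stepM :: "(nat \<Rightarrow> 'a \<Rightarrow> 'a) \<Rightarrow> (nat \<Rightarrow> 'c set) \<Rightarrow> ('c \<Rightarrow> 'a::real_vector set) \<Rightarrow> ('c \<times> 'c) set \<Rightarrow> 'c \<Rightarrow> 'c \<Rightarrow> 'a \<Rightarrow> 'a" where
  "stepM d I S M a b x = (if (b, a) \<in> M then - inv_into (S b) (bd d I S a b) x else bd d I S b a x)"

fun pidx :: "('c \<Rightarrow> 'c \<Rightarrow> 'a \<Rightarrow> 'a) \<Rightarrow> 'c list \<Rightarrow> 'a \<Rightarrow> 'a" where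
  "pidx st [] = id"
| "pidx st [a] = id"
| "pidx st (a # b # xs) = pidx st (b # xs) \<circ> st a b"

definition Gamma :: "(nat \<Rightarrow> 'a \<Rightarrow> 'a) \<Rightarrow> (nat \<Rightarrow> 'c set) \<Rightarrow> ('c \<Rightarrow> 'a::real_vector set) \<Rightarrow> ('c \<times> 'c) set \<Rightarrow> 'c \<Rightarrow> 'c \<Rightarrow> 'a \<Rightarrow> 'a" where
  "Gamma d I S M \<beta> \<alpha> x = (\<Sum>\<gamma>\<in>pathsM d I S M \<alpha> \<beta>. pidx (stepM d I S M) \<gamma> x)"

text \<open>C^M_n realised as the (internal) direct sum of the critical summands of C_n\<close>
definition morse_carrier :: "(nat \<Rightarrow> 'c set) \<Rightarrow> ('c \<Rightarrow> 'a::real_vector set) \<Rightarrow> ('c \<times> 'c) set \<Rightarrow> nat \<Rightarrow> 'a set" where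
  "morse_carrier I S M n = span (\<Union>\<alpha>\<in>{\<alpha>\<in>I n. critical M \<alpha>}. S \<alpha>)"

definition morse_bd :: "(nat \<Rightarrow> 'a \<Rightarrow> 'a) \<Rightarrow> (nat \<Rightarrow> 'c set) \<Rightarrow> ('c \<Rightarrow> 'a::real_vector set) \<Rightarrow> ('c \<times> 'c) set \<Rightarrow> nat \<Rightarrow> 'a \<Rightarrow> 'a" where
  "morse_bd d I S M n x = (if n = 0 then 0 else
     (\<Sum>\<alpha>\<in>{\<alpha>\<in>I n. critical M \<alpha>}. \<Sum>\<beta>\<in>{\<beta>\<in>I (n - 1). critical M \<beta>}. Gamma d I S M \<beta> \<alpha> (proj I S \<alpha> x)))"

definition morse_Phi :: "(nat \<Rightarrow> 'a \<Rightarrow> 'a) \<Rightarrow> (nat \<Rightarrow> 'c set) \<Rightarrow> ('c \<Rightarrow> 'a::real_vector set) \<Rightarrow> ('c \<times> 'c) set \<Rightarrow> nat \<Rightarrow> 'a \<Rightarrow> 'a" where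
  "morse_Phi d I S M n x =
     (\<Sum>\<alpha>\<in>{\<alpha>\<in>I n. critical M \<alpha>}. \<Sum>\<beta>\<in>I n. Gamma d I S M \<beta> \<alpha> (proj I S \<alpha> x))"

definition morse_Psi :: "(nat \<Rightarrow> 'a \<Rightarrow> 'a) \<Rightarrow> (nat \<Rightarrow> 'c set) \<Rightarrow> ('c \<Rightarrow> 'a::real_vector set) \<Rightarrow> ('c \<times> 'c) set \<Rightarrow> nat \<Rightarrow> 'a \<Rightarrow> 'a" where
  "morse_Psi d I S M n x =
     (\<Sum>\<alpha>\<in>I n. \<Sum>\<beta>\<in>{\<beta>\<in>I n. critical M \<beta>}. Gamma d I S M \<beta> \<alpha> (proj I S \<alpha> x))"

end

theory Submission
  imports Defs
begin

text \<open>
  Replace the homotopy h by s = h - \<Phi>\<Psi>h. Then \<Psi>s = 0 and ds + sd = id on ker \<Psi>, so that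
  C_n = A_n \<oplus> Z_n \<oplus> W_n with A_n = \<Phi>(D_n), Z_n the cycles in ker \<Psi>_n and W_n = s(Z_(n-1)).
  The boundary maps A_n into A_(n-1), kills Z_n and maps W_(n+1) isomorphically onto Z_n.
  Take the three summands as the cells 3n, 3n+1, 3n+2 of degree n and match W_(n+1) with Z_n.
  Every A-cell is critical, every other critical cell has zero summand, and every path of the
  modified graph is trivial, a reversed matched edge, or runs down through A-cells. Hence the
  Morse complex is (A, d), the Morse retraction is (\<Phi>\<Psi>, inclusion of A), and it is equivalent
  to (\<Psi>, \<Phi>) via \<Phi> : D \<cong> A and the identity of C.
\<close>

lemma lin_on_add: "lin_on A f \<Longrightarrow> x \<in> A \<Longrightarrow> y \<in> A \<Longrightarrow> f (x + y) = f x + f y"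
  by (simp add: lin_on_def)

lemma lin_on_scaleR: "lin_on A f \<Longrightarrow> x \<in> A \<Longrightarrow> f (c *\<^sub>R x) = c *\<^sub>R f x"
  by (simp add: lin_on_def)

lemma lin_on_zero: "lin_on A f \<Longrightarrow> subspace A \<Longrightarrow> f 0 = 0"
  using lin_on_scaleR[of A f 0 0] subspace_0 by auto

lemma lin_on_diff:
  assumes f: "lin_on A f" and A: "subspace A" and "x \<in> A" "y \<in> A"
  shows "f (x - y) = f x - f y"
  using lin_on_add[OF f \<open>x \<in> A\<close> subspace_neg[OF A \<open>y \<in> A\<close>]]
    lin_on_scaleR[OF f \<open>y \<in> A\<close>, of "-1"] by simp

lemma lin_on_subset: "lin_on A f \<Longrightarrow> B \<subseteq> A \<Longrightarrow> lin_on B f"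
  unfolding lin_on_def by blast

lemma lin_on_diff_fun: "lin_on A f \<Longrightarrow> lin_on A g \<Longrightarrow> lin_on A (\<lambda>x. f x - g x)"
  by (simp add: lin_on_def scaleR_diff_right)

lemma lin_on_comp: "lin_on A f \<Longrightarrow> f ` A \<subseteq> B \<Longrightarrow> lin_on B g \<Longrightarrow> lin_on A (\<lambda>x. g (f x))"
  unfolding lin_on_def by (simp add: image_subset_iff)

lemma subspace_image_lin_on:
  assumes f: "lin_on A f" and A: "subspace A"
  shows "subspace (f ` A)"
  unfolding subspace_def
proof (intro conjI ballI allI)
  show "0 \<in> f ` A"
    using lin_on_zero[OF f A] subspace_0[OF A] by (metis image_eqI)
next
  fix x y assume "x \<in> f ` A" "y \<in> f ` A"
  then show "x + y \<in> f ` A"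
    using lin_on_add[OF f] subspace_add[OF A] by (metis (no_types, lifting) imageE image_eqI)
next
  fix c x assume "x \<in> f ` A"
  then show "c *\<^sub>R x \<in> f ` A"
    using lin_on_scaleR[OF f] subspace_scale[OF A] by (metis (no_types, lifting) imageE image_eqI)
qed

lemma subspace_kernel_lin_on:
  assumes f: "lin_on A f" and A: "subspace A"
  shows "subspace {x \<in> A. f x = 0}"
  unfolding subspace_def
  using subspace_0[OF A] subspace_add[OF A] subspace_scale[OF A]
    lin_on_zero[OF f A] lin_on_add[OF f] lin_on_scaleR[OF f]
  by auto

lemma chain_iso_id: "chain_iso C d C d (\<lambda>n x. x)"
  by (simp add: chain_iso_def chain_map_def lin_on_def bij_betw_def)

lemma based_complex_deg: "based_complex C d I S \<Longrightarrow> \<alpha> \<in> I n \<Longrightarrow> deg I \<alpha> = n"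
  unfolding based_complex_def deg_def by blast

lemma based_complex_proj:
  assumes B: "based_complex C d I S" and "x \<in> C n" and c: "comps (I n) S x c" and "\<alpha> \<in> I n"
  shows "proj I S \<alpha> x = c \<alpha>"
proof -
  have "\<exists>!c. comps (I n) S x c"
    using B \<open>x \<in> C n\<close> by (simp add: based_complex_def direct_sum_decomp_def)
  then have "(THE c. comps (I n) S x c) = c"
    using c by (blast intro: the1_equality)
  then show ?thesis
    using based_complex_deg[OF B \<open>\<alpha> \<in> I n\<close>] by (simp add: proj_def)
qed

lemma based_complex_proj_mem:
  assumes B: "based_complex C d I S" and "x \<in> C n" and "\<alpha> \<in> I n"
  shows "proj I S \<alpha> x \<in> S \<alpha>"
proof -
  have "\<exists>!c. comps (I n) S x c"
    using B \<open>x \<in> C n\<close> by (simp add: based_complex_def direct_sum_decomp_def)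
  then obtain c where "comps (I n) S x c"
    by blast
  then show ?thesis
    using based_complex_proj[OF B \<open>x \<in> C n\<close>] \<open>\<alpha> \<in> I n\<close> by (simp add: comps_def)
qed

lemma based_complex_proj_summand:
  assumes B: "based_complex C d I S" and "\<alpha> \<in> I n" "\<beta> \<in> I n" and y: "y \<in> S \<alpha>"
  shows "proj I S \<beta> y = (if \<beta> = \<alpha> then y else 0)"
proof -
  have fin: "finite (I n)" and summands: "\<forall>\<gamma>\<in>I n. subspace (S \<gamma>) \<and> S \<gamma> \<subseteq> C n"
    using B by (auto simp: based_complex_def direct_sum_decomp_def)
  have "comps (I n) S y (\<lambda>\<gamma>. if \<gamma> = \<alpha> then y else 0)"
    using fin summands \<open>\<alpha> \<in> I n\<close> y by (auto simp: comps_def subspace_0)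
  moreover have "y \<in> C n"
    using summands \<open>\<alpha> \<in> I n\<close> y by blast
  ultimately show ?thesis
    using based_complex_proj[OF B] \<open>\<beta> \<in> I n\<close> by simp
qed

lemma pathsM_ConsE:
  assumes "p \<in> pathsM d I S M \<alpha> \<beta>" and "p \<noteq> [\<alpha>]"
  obtains \<gamma> ys where "p = \<alpha> # \<gamma> # ys" and "edgeM d I S M \<alpha> \<gamma>" and "\<gamma> # ys \<in> pathsM d I S M \<gamma> \<beta>"
proof -
  obtain xs where "p = \<alpha> # xs"
    using assms(1) by (cases p) (auto simp: pathsM_def)
  moreover obtain \<gamma> ys where "xs = \<gamma> # ys"
    using assms(2) calculation by (cases xs) auto
  ultimately show thesis
    using that assms(1) by (simp add: pathsM_def)
qed

section \<open>The splitting of a deformation retract\<close>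

definition cells :: "nat \<Rightarrow> nat set" where
  "cells n = {3*n, 3*n+1, 3*n+2}"

lemma mem_cells_iff: "\<alpha> \<in> cells n \<longleftrightarrow> \<alpha> div 3 = n"
  unfolding cells_def by auto

lemma div_mod_3_simps [simp]:
  fixes n :: nat
  shows "Suc (3*n) div 3 = n" "Suc (3*n) mod 3 = 1" "Suc (Suc (3*n)) div 3 = n"
    "Suc (Suc (3*n)) mod 3 = 2" "(3*n+3) div 3 = Suc n" "(3*n+3) mod 3 = 0"
    "(3*n+4) div 3 = Suc n" "(3*n+4) mod 3 = 1" "(3*n+5) div 3 = Suc n" "(3*n+5) mod 3 = 2"
  by presburger+

lemma finite_cells: "finite (cells n)"
  by (simp add: cells_def)

lemma deg_cells [simp]: "deg cells \<alpha> = \<alpha> div 3"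
  by (simp add: deg_def mem_cells_iff)

locale chain_deformation_retract =
  fixes C :: "nat \<Rightarrow> 'v::real_vector set" and d :: "nat \<Rightarrow> 'v \<Rightarrow> 'v"
    and D :: "nat \<Rightarrow> 'w::real_vector set" and e :: "nat \<Rightarrow> 'w \<Rightarrow> 'w"
    and Psi :: "nat \<Rightarrow> 'v \<Rightarrow> 'w" and Phi :: "nat \<Rightarrow> 'w \<Rightarrow> 'v" and h :: "nat \<Rightarrow> 'v \<Rightarrow> 'v"
  assumes complex_C: "chain_complex C d" and complex_D: "chain_complex D e"
    and retract: "deformation_retract C d D e Psi Phi h"
begin

lemma subspace_C: "subspace (C n)"
  using complex_C by (simp add: chain_complex_def fin_dim_subspace_def)

lemma subspace_D: "subspace (D n)"
  using complex_D by (simp add: chain_complex_def fin_dim_subspace_def)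

lemma lin_d: "lin_on (C n) (d n)"
  using complex_C by (simp add: chain_complex_def)

lemma d_mem: "x \<in> C n \<Longrightarrow> d n x \<in> C (n - 1)"
  using complex_C by (simp add: chain_complex_def)

lemma d_degree_0: "x \<in> C 0 \<Longrightarrow> d 0 x = 0"
  using complex_C by (simp add: chain_complex_def)

lemma d_d: "x \<in> C (Suc n) \<Longrightarrow> d n (d (Suc n) x) = 0"
  using complex_C by (simp add: chain_complex_def)

lemma lin_e: "lin_on (D n) (e n)"
  using complex_D by (simp add: chain_complex_def)

lemma e_mem: "y \<in> D n \<Longrightarrow> e n y \<in> D (n - 1)"
  using complex_D by (simp add: chain_complex_def)

lemma lin_Psi: "lin_on (C n) (Psi n)"
  using retract by (simp add: deformation_retract_def chain_map_def)

lemma Psi_mem: "x \<in> C n \<Longrightarrow> Psi n x \<in> D n"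
  using retract by (simp add: deformation_retract_def chain_map_def)

lemma e_Psi: "x \<in> C n \<Longrightarrow> e n (Psi n x) = Psi (n - 1) (d n x)"
  using retract by (simp add: deformation_retract_def chain_map_def)

lemma lin_Phi: "lin_on (D n) (Phi n)"
  using retract by (simp add: deformation_retract_def chain_map_def)

lemma Phi_mem: "y \<in> D n \<Longrightarrow> Phi n y \<in> C n"
  using retract by (simp add: deformation_retract_def chain_map_def)

lemma d_Phi: "y \<in> D n \<Longrightarrow> d n (Phi n y) = Phi (n - 1) (e n y)"
  using retract by (simp add: deformation_retract_def chain_map_def)

lemma Psi_Phi: "y \<in> D n \<Longrightarrow> Psi n (Phi n y) = y"
  using retract by (simp add: deformation_retract_def)

lemma lin_h: "lin_on (C n) (h n)"
  using retract by (simp add: deformation_retract_def)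

lemma h_mem: "x \<in> C n \<Longrightarrow> h n x \<in> C (Suc n)"
  using retract by (simp add: deformation_retract_def)

lemma homotopy: "x \<in> C n \<Longrightarrow> d (Suc n) (h n x) + h (n - 1) (d n x) = x - Phi n (Psi n x)"
  using retract by (simp add: deformation_retract_def)

lemma zero_mem_C [simp]: "0 \<in> C n"
  using subspace_0[OF subspace_C] .

lemma linear_maps_zero [simp]: "d n 0 = 0" "e n 0 = 0" "Psi n 0 = 0" "Phi n 0 = 0" "h n 0 = 0"
  using lin_on_zero[OF lin_d subspace_C] lin_on_zero[OF lin_e subspace_D] lin_on_zero[OF lin_Psi subspace_C]
    lin_on_zero[OF lin_Phi subspace_D] lin_on_zero[OF lin_h subspace_C] by auto

lemma Phi_Psi_mem: "x \<in> C n \<Longrightarrow> Phi n (Psi n x) \<in> C n"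
  by (simp add: Phi_mem Psi_mem)

lemma d_Phi_Psi: "x \<in> C n \<Longrightarrow> d n (Phi n (Psi n x)) = Phi (n - 1) (Psi (n - 1) (d n x))"
  by (simp add: d_Phi e_Psi Psi_mem)

lemma Psi_diff_Phi_Psi: "x \<in> C n \<Longrightarrow> Psi n (x - Phi n (Psi n x)) = 0"
  by (simp add: lin_on_diff[OF lin_Psi subspace_C] Phi_Psi_mem Psi_Phi Psi_mem)

definition s :: "nat \<Rightarrow> 'v \<Rightarrow> 'v" where
  "s n x = h n x - Phi (Suc n) (Psi (Suc n) (h n x))"

lemma s_mem: "x \<in> C n \<Longrightarrow> s n x \<in> C (Suc n)"
  unfolding s_def by (simp add: subspace_diff[OF subspace_C] h_mem Phi_Psi_mem)

lemma lin_s: "lin_on (C n) (s n)"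
proof -
  have "lin_on (C n) (\<lambda>x. Psi (Suc n) (h n x))"
    by (rule lin_on_comp[OF lin_h _ lin_Psi]) (auto intro: h_mem)
  then have "lin_on (C n) (\<lambda>x. Phi (Suc n) (Psi (Suc n) (h n x)))"
    by (rule lin_on_comp[OF _ _ lin_Phi]) (auto intro: h_mem Psi_mem)
  then show ?thesis
    unfolding s_def[abs_def] by (rule lin_on_diff_fun[OF lin_h])
qed

lemma s_zero [simp]: "s n 0 = 0"
  by (simp add: s_def)

lemma Psi_s: "x \<in> C n \<Longrightarrow> Psi (Suc n) (s n x) = 0"
  unfolding s_def by (rule Psi_diff_Phi_Psi[OF h_mem])

lemma s_homotopy:
  assumes x: "x \<in> C n" and "Psi n x = 0"
  shows "d (Suc n) (s n x) + s (n - 1) (d n x) = x"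
proof -
  define p q where "p = d (Suc n) (h n x)" and "q = h (n - 1) (d n x)"
  have p: "p \<in> C n"
    unfolding p_def using d_mem[OF h_mem[OF x]] by simp
  have q: "q \<in> C n"
    unfolding q_def using x d_mem[OF x] h_mem d_degree_0 by (cases n) auto
  have "p + q = x"
    unfolding p_def q_def using homotopy[OF x] \<open>Psi n x = 0\<close> by simp
  then have Psi_pq: "Psi n p + Psi n q = 0"
    using lin_on_add[OF lin_Psi p q] \<open>Psi n x = 0\<close> by simp
  have "d (Suc n) (s n x) = p - Phi n (Psi n p)"
    unfolding s_def p_def
    using lin_on_diff[OF lin_d subspace_C h_mem[OF x] Phi_Psi_mem[OF h_mem[OF x]]]
      d_Phi_Psi[OF h_mem[OF x]] by simp
  moreover have "s (n - 1) (d n x) = q - Phi n (Psi n q)"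
    unfolding q_def using x d_degree_0 by (cases n) (simp_all add: s_def)
  ultimately have "d (Suc n) (s n x) + s (n - 1) (d n x)
      = (p + q) - (Phi n (Psi n p) + Phi n (Psi n q))"
    by (simp add: algebra_simps)
  also have "\<dots> = x"
    using \<open>p + q = x\<close> Psi_pq lin_on_add[OF lin_Phi Psi_mem[OF p] Psi_mem[OF q]] by simp
  finally show ?thesis .
qed

definition A :: "nat \<Rightarrow> 'v set" where
  "A n = Phi n ` D n"

definition Z :: "nat \<Rightarrow> 'v set" where
  "Z n = {x \<in> C n. Psi n x = 0 \<and> d n x = 0}"

primrec W :: "nat \<Rightarrow> 'v set" where
  "W 0 = {0}"
| "W (Suc n) = s n ` Z n"

lemma A_subset_C: "A n \<subseteq> C n"
  using Phi_mem by (auto simp: A_def)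

lemma Z_subset_C: "Z n \<subseteq> C n"
  by (auto simp: Z_def)

lemma W_subset_C: "W n \<subseteq> C n"
  using s_mem Z_subset_C by (cases n) auto

lemma subspace_A: "subspace (A n)"
  unfolding A_def by (rule subspace_image_lin_on[OF lin_Phi subspace_D])

lemma subspace_Z: "subspace (Z n)"
proof -
  have "Z n = {x \<in> C n. Psi n x = 0} \<inter> {x \<in> C n. d n x = 0}"
    by (auto simp: Z_def)
  then show ?thesis
    using subspace_kernel_lin_on[OF lin_Psi subspace_C] subspace_kernel_lin_on[OF lin_d subspace_C]
    by (simp add: subspace_inter)
qed

lemma subspace_W: "subspace (W n)"
proof (cases n)
  case 0
  then show ?thesis by (simp add: subspace_single_0)
next
  case (Suc m)
  then show ?thesis
    using subspace_image_lin_on[OF lin_on_subset[OF lin_s Z_subset_C] subspace_Z] by simp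
qed

lemma d_s_Z: "z \<in> Z n \<Longrightarrow> d (Suc n) (s n z) = z"
  using s_homotopy[of z n] by (simp add: Z_def)

lemma Psi_W: "w \<in> W n \<Longrightarrow> Psi n w = 0"
  using Psi_s Z_subset_C by (cases n) auto

lemma d_A: "x \<in> A (Suc n) \<Longrightarrow> d (Suc n) x \<in> A n"
  using d_Phi e_mem by (fastforce simp: A_def)

definition summand :: "nat \<Rightarrow> 'v set" where
  "summand \<alpha> = (if \<alpha> mod 3 = 0 then A (\<alpha> div 3) else if \<alpha> mod 3 = 1 then Z (\<alpha> div 3) else W (\<alpha> div 3))"

lemma summand_simps [simp]:
  "summand (3*n) = A n" "summand (Suc (3*n)) = Z n" "summand (Suc (Suc (3*n))) = W n"
  "summand (3*n+3) = A (Suc n)" "summand (3*n+5) = W (Suc n)"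
  by (simp_all add: summand_def)

lemma subspace_summand: "subspace (summand \<alpha>)"
  by (simp add: summand_def subspace_A subspace_Z subspace_W)

definition components :: "nat \<Rightarrow> 'v \<Rightarrow> nat \<Rightarrow> 'v" where
  "components n x \<alpha> =
     (let k = x - Phi n (Psi n x) in
      if \<alpha> = 3*n then Phi n (Psi n x)
      else if \<alpha> = 3*n+1 then d (Suc n) (s n k)
      else if \<alpha> = 3*n+2 then s (n - 1) (d n k)
      else 0)"

lemma sum_cells: "(\<Sum>\<alpha>\<in>cells n. f \<alpha>) = f (3*n) + f (3*n+1) + f (3*n+2)"
  by (simp add: cells_def add.assoc)

lemma comps_components:
  assumes x: "x \<in> C n"
  shows "comps (cells n) summand x (components n x)"
proof -
  define k where "k = x - Phi n (Psi n x)"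
  have k: "k \<in> C n" "Psi n k = 0"
    unfolding k_def using subspace_diff[OF subspace_C x Phi_Psi_mem[OF x]] Psi_diff_Phi_Psi[OF x]
    by auto
  have "Phi n (Psi n x) \<in> A n"
    using Psi_mem[OF x] by (simp add: A_def)
  moreover have "d (Suc n) (s n k) \<in> Z n"
    using d_mem[OF s_mem[OF k(1)]] e_Psi[OF s_mem[OF k(1)]] Psi_s[OF k(1)] d_d[OF s_mem[OF k(1)]]
    by (simp add: Z_def)
  moreover have "s (n - 1) (d n k) \<in> W n"
  proof (cases n)
    case 0
    then show ?thesis using k d_degree_0 by simp
  next
    case (Suc m)
    then have "d n k \<in> Z m"
      using d_mem[of k n] e_Psi[of k n] d_d[of k m] k by (simp add: Z_def)
    then show ?thesis using Suc by simp
  qed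
  moreover have "Phi n (Psi n x) + d (Suc n) (s n k) + s (n - 1) (d n k) = x"
    using s_homotopy[OF k] by (simp add: k_def add.assoc)
  ultimately show ?thesis
    unfolding comps_def sum_cells by (auto simp: components_def cells_def k_def[symmetric])
qed

lemma components_unique:
  assumes x: "x \<in> C n" and c: "comps (cells n) summand x c"
  shows "c = components n x"
proof -
  define a z w where "a = c (3*n)" and "z = c (3*n+1)" and "w = c (3*n+2)"
  have "a \<in> A n" and z: "z \<in> Z n" and w: "w \<in> W n"
    using c by (auto simp: comps_def a_def z_def w_def cells_def)
  then obtain y where y: "y \<in> D n" "a = Phi n y"
    by (auto simp: A_def)
  have outside: "\<And>\<alpha>. \<alpha> \<notin> cells n \<Longrightarrow> c \<alpha> = 0"
    using c by (simp add: comps_def)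
  have x_sum: "x = a + z + w"
    using c by (simp add: comps_def sum_cells a_def z_def w_def)
  have a_C: "a \<in> C n" and z_C: "z \<in> C n" and w_C: "w \<in> C n"
    using \<open>a \<in> A n\<close> z w A_subset_C Z_subset_C W_subset_C by blast+
  have "Psi n x = Psi n a + Psi n z + Psi n w"
    using x_sum lin_on_add[OF lin_Psi subspace_add[OF subspace_C a_C z_C] w_C]
      lin_on_add[OF lin_Psi a_C z_C] by simp
  then have a_eq: "Phi n (Psi n x) = a"
    using y Psi_Phi Psi_W[OF w] z by (simp add: Z_def)
  define k where "k = x - Phi n (Psi n x)"
  have k: "k = z + w" "k \<in> C n" "Psi n k = 0"
    unfolding k_def using x_sum a_eq subspace_diff[OF subspace_C x Phi_Psi_mem[OF x]]
      Psi_diff_Phi_Psi[OF x] by auto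
  have w_eq: "s (n - 1) (d n k) = w"
  proof (cases n)
    case 0
    then show ?thesis using w k d_degree_0 by simp
  next
    case (Suc m)
    then obtain z' where "z' \<in> Z m" "w = s m z'"
      using w by auto
    moreover have "d n k = d n z + d n w"
      using k lin_on_add[OF lin_d z_C w_C] by simp
    ultimately show ?thesis
      using z d_s_Z Suc by (simp add: Z_def)
  qed
  then have z_eq: "d (Suc n) (s n k) = z"
    using s_homotopy[OF k(2,3)] k(1) by simp
  show ?thesis
  proof
    fix \<alpha>
    show "c \<alpha> = components n x \<alpha>"
      using a_eq z_eq w_eq outside
      by (auto simp: components_def cells_def a_def z_def w_def k_def Let_def)
  qed
qed

lemma direct_sum_decomp_cells: "direct_sum_decomp (C n) (cells n) summand"
proof -
  have "\<forall>\<alpha>\<in>cells n. subspace (summand \<alpha>) \<and> summand \<alpha> \<subseteq> C n"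
    using subspace_summand A_subset_C Z_subset_C W_subset_C by (auto simp: cells_def)
  moreover have "\<forall>x\<in>C n. \<exists>!c. comps (cells n) summand x c"
    using comps_components components_unique by blast
  ultimately show ?thesis
    by (simp add: direct_sum_decomp_def cells_def)
qed

lemma based_complex_cells: "based_complex C d cells summand"
  using complex_C direct_sum_decomp_cells by (auto simp: based_complex_def mem_cells_iff)

lemma proj_summand:
  "\<alpha> \<in> cells n \<Longrightarrow> \<beta> \<in> cells n \<Longrightarrow> y \<in> summand \<alpha> \<Longrightarrow>
     proj cells summand \<beta> y = (if \<beta> = \<alpha> then y else 0)"
  by (rule based_complex_proj_summand[OF based_complex_cells])

lemma proj_zero: "\<beta> \<in> cells n \<Longrightarrow> proj cells summand \<beta> 0 = 0"
  using proj_summand[of \<beta> n \<beta> 0] subspace_0[OF subspace_summand] by simp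

lemma proj_A_cell: "x \<in> C n \<Longrightarrow> proj cells summand (3*n) x = Phi n (Psi n x)"
  using based_complex_proj[OF based_complex_cells _ comps_components]
  by (simp add: components_def mem_cells_iff)

subsection \<open>The Morse matching\<close>

text \<open>Cell 3n+5 carries W_(n+1). Zero summands cannot be matched, since an edge needs a
  nonzero boundary component.\<close>
definition matching :: "(nat \<times> nat) set" where
  "matching = {(3*n+5, 3*n+1) | n. Z n \<noteq> {0}}"

lemma matching_cases: "(\<alpha>, \<beta>) \<in> matching \<Longrightarrow> \<alpha> mod 3 = 2 \<and> \<beta> mod 3 = 1 \<and> \<alpha> = \<beta> + 4"
  by (auto simp: matching_def)

lemma bd_A: "x \<in> A (Suc n) \<Longrightarrow> \<beta> \<in> cells n \<Longrightarrow>
    bd d cells summand \<beta> (3*n+3) x = (if \<beta> = 3*n then d (Suc n) x else 0)"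
  using proj_summand[of "3*n" n \<beta> "d (Suc n) x"] d_A by (simp add: bd_def mem_cells_iff)

lemma bd_W: "z \<in> Z n \<Longrightarrow> \<beta> \<in> cells n \<Longrightarrow>
    bd d cells summand \<beta> (3*n+5) (s n z) = (if \<beta> = 3*n+1 then z else 0)"
  using proj_summand[of "3*n+1" n \<beta> z] d_s_Z by (simp add: bd_def mem_cells_iff)

lemma edge_cases:
  assumes "edge d cells summand \<alpha> \<beta>"
  shows "(\<alpha> mod 3 = 0 \<and> \<beta> + 3 = \<alpha>) \<or> (\<alpha>, \<beta>) \<in> matching"
proof -
  obtain m x where \<alpha>: "\<alpha> div 3 = Suc m" and \<beta>: "\<beta> \<in> cells m" and x: "x \<in> summand \<alpha>"
    and nonzero: "bd d cells summand \<beta> \<alpha> x \<noteq> 0"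
    using assms by (auto simp: edge_def mem_cells_iff)
  have "\<alpha> = 3*m+3 \<or> \<alpha> = 3*m+4 \<or> \<alpha> = 3*m+5"
    using \<alpha> by presburger
  then consider "\<alpha> = 3*m+3" | "\<alpha> = 3*m+4" | "\<alpha> = 3*m+5"
    by blast
  then show ?thesis
  proof cases
    case 1
    then show ?thesis
      using bd_A[of x m \<beta>] x \<beta> nonzero by (auto split: if_splits)
  next
    case 2
    then have "x \<in> Z (Suc m)"
      using x by (simp add: summand_def)
    then show ?thesis
      using nonzero 2 proj_zero[OF \<beta>] by (simp add: bd_def Z_def)
  next
    case 3
    then obtain z where z: "z \<in> Z m" "x = s m z"
      using x by auto
    then have "\<beta> = 3*m+1" "z \<noteq> 0"
      using bd_W[OF z(1) \<beta>] nonzero 3 by (auto split: if_splits)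
    then show ?thesis
      using z 3 by (auto simp: matching_def)
  qed
qed

lemma edgeM_cases:
  "edgeM d cells summand matching \<alpha> \<beta> \<Longrightarrow> (\<alpha> mod 3 = 0 \<and> \<beta> + 3 = \<alpha>) \<or> (\<beta>, \<alpha>) \<in> matching"
  unfolding edgeM_def using edge_cases by blast

lemma nontrivial_pathsM_cases:
  "p \<in> pathsM d cells summand matching \<alpha> \<beta> \<Longrightarrow> p \<noteq> [\<alpha>] \<Longrightarrow>
     (\<alpha> mod 3 = 0 \<and> \<beta> mod 3 = 0 \<and> \<beta> < \<alpha>) \<or> (\<beta>, \<alpha>) \<in> matching"
proof (induction p arbitrary: \<alpha>)
  case Nil
  then show ?case by (simp add: pathsM_def)
next
  case (Cons a p)
  then obtain \<gamma> ys where p: "p = \<gamma> # ys" and step: "edgeM d cells summand matching \<alpha> \<gamma>"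
    and path: "\<gamma> # ys \<in> pathsM d cells summand matching \<gamma> \<beta>"
    by (metis list.inject pathsM_ConsE)
  show ?case
  proof (cases "ys = []")
    case True
    then show ?thesis
      using edgeM_cases[OF step] path by (auto simp: pathsM_def)
  next
    case False
    then have IH: "(\<gamma> mod 3 = 0 \<and> \<beta> mod 3 = 0 \<and> \<beta> < \<gamma>) \<or> (\<beta>, \<gamma>) \<in> matching"
      using Cons.IH path p by simp
    from edgeM_cases[OF step] show ?thesis
    proof
      assume A_step: "\<alpha> mod 3 = 0 \<and> \<gamma> + 3 = \<alpha>"
      then have "\<gamma> mod 3 = 0"
        by presburger
      then show ?thesis
        using IH A_step matching_cases by fastforce
    next
      assume "(\<gamma>, \<alpha>) \<in> matching"
      then have "\<gamma> mod 3 = 2"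
        using matching_cases by blast
      then show ?thesis
        using IH matching_cases by fastforce
    qed
  qed
qed

lemma pathsM_same_degree:
  assumes "\<alpha> div 3 = \<beta> div 3"
  shows "pathsM d cells summand matching \<alpha> \<beta> = (if \<alpha> = \<beta> then {[\<alpha>]} else {})"
proof -
  have "p = [\<alpha>]" if p: "p \<in> pathsM d cells summand matching \<alpha> \<beta>" for p
    using nontrivial_pathsM_cases[OF p] assms matching_cases by fastforce
  moreover have "[\<alpha>] \<in> pathsM d cells summand matching \<alpha> \<beta> \<longleftrightarrow> \<alpha> = \<beta>"
    by (simp add: pathsM_def)
  ultimately show ?thesis
    by auto
qed

lemma Gamma_same_degree:
  "\<alpha> div 3 = \<beta> div 3 \<Longrightarrow> Gamma d cells summand matching \<beta> \<alpha> y = (if \<beta> = \<alpha> then y else 0)"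
  by (auto simp: Gamma_def pathsM_same_degree)

lemma sum_Gamma_same_degree:
  assumes "\<alpha> \<in> cells n" and "B \<subseteq> cells n"
  shows "(\<Sum>\<beta>\<in>B. Gamma d cells summand matching \<beta> \<alpha> y) = (if \<alpha> \<in> B then y else 0)"
proof -
  have "finite B"
    using assms(2) finite_cells finite_subset by blast
  moreover have "(\<Sum>\<beta>\<in>B. Gamma d cells summand matching \<beta> \<alpha> y) = (\<Sum>\<beta>\<in>B. if \<beta> = \<alpha> then y else 0)"
    using assms by (intro sum.cong) (auto simp: Gamma_same_degree mem_cells_iff)
  ultimately show ?thesis
    by (simp add: sum.delta)
qed

lemma pathsM_from_critical:
  assumes "critical matching \<alpha>" and "\<alpha> div 3 = Suc n" and "\<beta> div 3 = n"
    and "pathsM d cells summand matching \<alpha> \<beta> \<noteq> {}"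
  shows "\<alpha> = 3*n+3 \<and> \<beta> = 3*n"
proof -
  obtain p where p: "p \<in> pathsM d cells summand matching \<alpha> \<beta>"
    using assms(4) by blast
  moreover have "\<alpha> \<noteq> \<beta>"
    using assms(2,3) by auto
  then have "p \<noteq> [\<alpha>]"
    using p by (force simp: pathsM_def)
  ultimately have "(\<alpha> mod 3 = 0 \<and> \<beta> mod 3 = 0 \<and> \<beta> < \<alpha>) \<or> (\<beta>, \<alpha>) \<in> matching"
    by (rule nontrivial_pathsM_cases)
  moreover have "(\<beta>, \<alpha>) \<notin> matching"
    using assms(1) by (force simp: critical_def)
  ultimately show ?thesis
    using assms(2,3) by presburger
qed

lemma pathsM_A_down:
  "pathsM d cells summand matching (3*n+3) (3*n) =
     (if edge d cells summand (3*n+3) (3*n) then {[3*n+3, 3*n]} else {})"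
proof -
  have not_matched: "(3*n+3, 3*n) \<notin> matching" "(\<gamma>, 3*n+3) \<notin> matching" for \<gamma>
    using matching_cases[of "3*n+3" "3*n"] matching_cases[of \<gamma> "3*n+3"] by auto
  have "p = [3*n+3, 3*n]" if p: "p \<in> pathsM d cells summand matching (3*n+3) (3*n)" for p
  proof -
    have "p \<noteq> [3*n+3]"
      using p by (auto simp: pathsM_def)
    with p obtain \<gamma> ys where p_eq: "p = (3*n+3) # \<gamma> # ys"
      and step: "edgeM d cells summand matching (3*n+3) \<gamma>"
      and path: "\<gamma> # ys \<in> pathsM d cells summand matching \<gamma> (3*n)"
      by (rule pathsM_ConsE)
    have "\<gamma> = 3*n"
      using edgeM_cases[OF step] not_matched(2) by auto
    then have "ys = []"
      using path pathsM_same_degree[of \<gamma> "3*n"] by simp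
    then show ?thesis
      using p_eq \<open>\<gamma> = 3*n\<close> by simp
  qed
  moreover have "[3*n+3, 3*n] \<in> pathsM d cells summand matching (3*n+3) (3*n) \<longleftrightarrow>
      edge d cells summand (3*n+3) (3*n)"
    using not_matched by (simp add: pathsM_def edgeM_def)
  ultimately show ?thesis
    by auto
qed

lemma Gamma_A_down:
  assumes x: "x \<in> A (Suc n)"
  shows "Gamma d cells summand matching (3*n) (3*n+3) x = d (Suc n) x"
proof -
  have bd_eq: "bd d cells summand (3*n) (3*n+3) y = d (Suc n) y" if "y \<in> A (Suc n)" for y
    using bd_A[OF that] by (simp add: mem_cells_iff)
  have "(3*n, 3*n+3) \<notin> matching"
    using matching_cases by fastforce
  then have "edge d cells summand (3*n+3) (3*n) \<Longrightarrow> ?thesis"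
    using bd_eq[OF x] by (simp add: Gamma_def pathsM_A_down stepM_def)
  moreover have "\<not> edge d cells summand (3*n+3) (3*n) \<Longrightarrow> d (Suc n) x = 0"
    using bd_eq x by (auto simp: edge_def mem_cells_iff)
  ultimately show ?thesis
    by (auto simp: Gamma_def pathsM_A_down)
qed

lemma bd_matched: "z \<in> Z n \<Longrightarrow> bd d cells summand (3*n+1) (3*n+5) (s n z) = z"
  using bd_W[of z n "3*n+1"] by (simp add: mem_cells_iff)

lemma matched_edge:
  assumes "(\<alpha>, \<beta>) \<in> matching"
  shows "edge d cells summand \<alpha> \<beta>"
proof -
  obtain n where n: "\<alpha> = 3*n+5" "\<beta> = 3*n+1" and "Z n \<noteq> {0}"
    using assms by (auto simp: matching_def)
  then obtain z where z: "z \<in> Z n" "z \<noteq> 0"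
    using subspace_0[OF subspace_Z] by blast
  then have "s n z \<in> summand \<alpha>" "bd d cells summand \<beta> \<alpha> (s n z) \<noteq> 0"
    using n bd_matched by auto
  moreover have "\<alpha> \<in> cells (Suc n)" "\<beta> \<in> cells n"
    using n by (simp_all add: mem_cells_iff)
  ultimately show ?thesis
    unfolding edge_def by blast
qed

lemma matched_bd_bij:
  assumes "(\<alpha>, \<beta>) \<in> matching"
  shows "bij_betw (bd d cells summand \<beta> \<alpha>) (summand \<alpha>) (summand \<beta>)"
proof -
  obtain n where n: "\<alpha> = 3*n+5" "\<beta> = 3*n+1"
    using assms by (auto simp: matching_def)
  then have "summand \<alpha> = s n ` Z n" "summand \<beta> = Z n"
    by simp_all
  moreover have "bd d cells summand \<beta> \<alpha> (s n z) = z" if "z \<in> Z n" for z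
    using bd_matched[OF that] n by simp
  ultimately show ?thesis
    by (auto simp: bij_betw_def inj_on_def image_image)
qed

lemma morse_matching_cells: "morse_matching d cells summand matching"
proof -
  have "\<forall>(\<alpha>, \<beta>)\<in>matching. \<forall>(\<alpha>', \<beta>')\<in>matching.
      (\<alpha> = \<alpha>' \<or> \<alpha> = \<beta>' \<or> \<beta> = \<alpha>' \<or> \<beta> = \<beta>') \<longrightarrow> (\<alpha>, \<beta>) = (\<alpha>', \<beta>')"
  proof (clarify)
    fix \<alpha> \<beta> \<alpha>' \<beta>'
    assume "(\<alpha>, \<beta>) \<in> matching" "(\<alpha>', \<beta>') \<in> matching"
      and "\<alpha> = \<alpha>' \<or> \<alpha> = \<beta>' \<or> \<beta> = \<alpha>' \<or> \<beta> = \<beta>'"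
    then show "\<alpha> = \<alpha>' \<and> \<beta> = \<beta>'"
      using matching_cases[of \<alpha> \<beta>] matching_cases[of \<alpha>' \<beta>'] by auto
  qed
  moreover have "{(\<alpha>, \<beta>). \<alpha> \<in> cells n \<and> \<beta> \<in> cells n \<and> pathsM d cells summand matching \<alpha> \<beta> \<noteq> {}}
      = Id_on (cells n)" for n
    by (auto simp: pathsM_same_degree mem_cells_iff Id_on_def)
  ultimately show ?thesis
    using matched_edge matched_bd_bij
    by (auto simp: morse_matching_def partial_order_on_def preorder_on_def refl_on_def
        trans_def antisym_def)
qed

subsection \<open>The Morse complex and the Morse retraction\<close>

abbreviation critical_cells :: "nat \<Rightarrow> nat set" where
  "critical_cells n \<equiv> {\<alpha> \<in> cells n. critical matching \<alpha>}"

lemma critical_A_cell: "\<alpha> mod 3 = 0 \<Longrightarrow> critical matching \<alpha>"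
proof -
  assume "\<alpha> mod 3 = 0"
  then have "(\<alpha>, \<beta>) \<notin> matching" "(\<beta>, \<alpha>) \<notin> matching" for \<beta>
    using matching_cases[of \<alpha> \<beta>] matching_cases[of \<beta> \<alpha>] by auto
  then show ?thesis
    by (force simp: critical_def)
qed

lemma critical_summand_trivial:
  assumes "\<alpha> \<in> cells n" "\<alpha> \<noteq> 3*n" and critical: "critical matching \<alpha>"
  shows "summand \<alpha> = {0}"
proof -
  have unmatched: "Z m = {0}" if "(3*m+5, 3*m+1) \<in> matching \<Longrightarrow> \<not> critical matching \<alpha>" for m
    using that critical by (auto simp: matching_def)
  consider "\<alpha> = Suc (3*n)" | "\<alpha> = Suc (Suc (3*n))"
    using assms(1,2) by (auto simp: cells_def)
  then show ?thesis
  proof cases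
    case 1
    then have "Z n = {0}"
      by (intro unmatched) (force simp: critical_def)
    then show ?thesis
      using 1 by simp
  next
    case 2
    show ?thesis
    proof (cases n)
      case 0
      then show ?thesis
        using 2 by (simp add: summand_def)
    next
      case (Suc m)
      then have "\<alpha> = 3*m+5"
        using 2 by simp
      then have "summand \<alpha> = s m ` Z m"
        by simp
      moreover have "Z m = {0}"
        using \<open>\<alpha> = 3*m+5\<close> by (intro unmatched) (force simp: critical_def)
      ultimately show ?thesis
        by simp
    qed
  qed
qed

lemma morse_carrier_eq: "morse_carrier cells summand matching n = A n"
proof -
  have "(\<Union>\<alpha>\<in>critical_cells n. summand \<alpha>) = A n"
  proof
    show "(\<Union>\<alpha>\<in>critical_cells n. summand \<alpha>) \<subseteq> A n"
    proof
      fix x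
      assume "x \<in> (\<Union>\<alpha>\<in>critical_cells n. summand \<alpha>)"
      then obtain \<alpha> where "\<alpha> \<in> cells n" "critical matching \<alpha>" "x \<in> summand \<alpha>"
        by blast
      then show "x \<in> A n"
        using critical_summand_trivial subspace_0[OF subspace_A] by (cases "\<alpha> = 3*n") auto
    qed
    have "3*n \<in> critical_cells n"
      by (simp add: critical_A_cell mem_cells_iff)
    then show "A n \<subseteq> (\<Union>\<alpha>\<in>critical_cells n. summand \<alpha>)"
      by (metis UN_upper summand_simps(1))
  qed
  then show ?thesis
    by (simp add: morse_carrier_def span_eq_iff subspace_A)
qed

lemma morse_bd_A:
  assumes x: "x \<in> A (Suc n)"
  shows "morse_bd d cells summand matching (Suc n) x = d (Suc n) x"
proof -
  have Gamma_eq: "Gamma d cells summand matching \<beta> \<alpha> (proj cells summand \<alpha> x) =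
      (if \<beta> = 3*n then if \<alpha> = 3*n+3 then d (Suc n) x else 0 else 0)"
    if "\<alpha> \<in> critical_cells (Suc n)" "\<beta> \<in> critical_cells n"
    for \<alpha> \<beta>
  proof (cases "\<alpha> = 3*n+3 \<and> \<beta> = 3*n")
    case True
    have "proj cells summand (3*n+3) x = x"
      using proj_summand[of "3*n+3" "Suc n" "3*n+3" x] x by (simp add: mem_cells_iff)
    then show ?thesis
      using True Gamma_A_down[OF x] by simp
  next
    case False
    moreover have "critical matching \<alpha>" "\<alpha> div 3 = Suc n" "\<beta> div 3 = n"
      using that by (simp_all add: mem_cells_iff)
    ultimately have "pathsM d cells summand matching \<alpha> \<beta> = {}"
      using pathsM_from_critical by blast
    then show ?thesis
      using False by (simp add: Gamma_def)
  qed
  have "morse_bd d cells summand matching (Suc n) x =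
      (\<Sum>\<alpha>\<in>critical_cells (Suc n). \<Sum>\<beta>\<in>critical_cells n.
         if \<beta> = 3*n then if \<alpha> = 3*n+3 then d (Suc n) x else 0 else 0)"
    unfolding morse_bd_def by (simp only: nat.simps if_False diff_Suc_1) (intro sum.cong refl Gamma_eq)
  also have "\<dots> = d (Suc n) x"
  proof -
    have "3*n \<in> critical_cells n"
      "3*n+3 \<in> critical_cells (Suc n)"
      by (simp_all add: critical_A_cell mem_cells_iff)
    then show ?thesis
      by (simp add: finite_cells)
  qed
  finally show ?thesis .
qed

lemma morse_Phi_A:
  assumes x: "x \<in> A n"
  shows "morse_Phi d cells summand matching n x = x"
proof -
  have "(\<Sum>\<beta>\<in>cells n. Gamma d cells summand matching \<beta> \<alpha> (proj cells summand \<alpha> x)) =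
      (if \<alpha> = 3*n then x else 0)" if \<alpha>: "\<alpha> \<in> cells n" for \<alpha>
    using sum_Gamma_same_degree[OF \<alpha> order_refl] proj_summand[of "3*n" n \<alpha> x] \<alpha> x
    by (simp add: mem_cells_iff)
  then have "morse_Phi d cells summand matching n x =
      (\<Sum>\<alpha>\<in>critical_cells n. if \<alpha> = 3*n then x else 0)"
    unfolding morse_Phi_def by (auto intro!: sum.cong)
  also have "\<dots> = x"
  proof -
    have "3*n \<in> critical_cells n"
      by (simp add: critical_A_cell mem_cells_iff)
    then show ?thesis
      by (simp add: finite_cells)
  qed
  finally show ?thesis .
qed

lemma morse_Psi_eq:
  assumes x: "x \<in> C n"
  shows "morse_Psi d cells summand matching n x = Phi n (Psi n x)"
proof -
  have "(\<Sum>\<beta>\<in>critical_cells n.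
          Gamma d cells summand matching \<beta> \<alpha> (proj cells summand \<alpha> x)) =
      (if \<alpha> = 3*n then Phi n (Psi n x) else 0)" if \<alpha>: "\<alpha> \<in> cells n" for \<alpha>
  proof -
    have "(\<Sum>\<beta>\<in>critical_cells n.
          Gamma d cells summand matching \<beta> \<alpha> (proj cells summand \<alpha> x)) =
        (if critical matching \<alpha> then proj cells summand \<alpha> x else 0)"
      using sum_Gamma_same_degree[OF \<alpha>, of "critical_cells n"] \<alpha> by simp
    also have "\<dots> = (if \<alpha> = 3*n then Phi n (Psi n x) else 0)"
      using critical_A_cell[of "3*n"] proj_A_cell[OF x] critical_summand_trivial[OF \<alpha>]
        based_complex_proj_mem[OF based_complex_cells x \<alpha>] by auto
    finally show ?thesis .
  qed
  then have "morse_Psi d cells summand matching n x = (\<Sum>\<alpha>\<in>cells n. if \<alpha> = 3*n then Phi n (Psi n x) else 0)"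
    unfolding morse_Psi_def by (auto intro!: sum.cong)
  also have "\<dots> = Phi n (Psi n x)"
    by (simp add: finite_cells mem_cells_iff)
  finally show ?thesis .
qed

lemma chain_iso_Phi_morse:
  "chain_iso D e (morse_carrier cells summand matching) (morse_bd d cells summand matching) Phi"
  unfolding chain_iso_def chain_map_def morse_carrier_eq
proof (intro conjI allI ballI)
  fix n y
  assume y: "y \<in> D n"
  then show "Phi n y \<in> A n"
    by (simp add: A_def)
  show "morse_bd d cells summand matching n (Phi n y) = Phi (n - 1) (e n y)"
  proof (cases n)
    case 0
    then show ?thesis
      using d_Phi[OF y] d_degree_0 Phi_mem[OF y] by (simp add: morse_bd_def)
  next
    case (Suc m)
    then show ?thesis
      using morse_bd_A[of "Phi n y" m] d_Phi[OF y] y by (simp add: A_def)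
  qed
next
  fix n
  show "bij_betw (Phi n) (D n) (A n)"
    unfolding A_def bij_betw_def using Psi_Phi by (metis inj_on_inverseI)
qed (rule lin_Phi)

end

theorem mainTheorem1:
  fixes C :: "nat \<Rightarrow> 'v::real_inner set" and d :: "nat \<Rightarrow> 'v \<Rightarrow> 'v"
    and D :: "nat \<Rightarrow> 'w::real_inner set" and e :: "nat \<Rightarrow> 'w \<Rightarrow> 'w"
    and Psi :: "nat \<Rightarrow> 'v \<Rightarrow> 'w" and Phi :: "nat \<Rightarrow> 'w \<Rightarrow> 'v" and h :: "nat \<Rightarrow> 'v \<Rightarrow> 'v"
  assumes "chain_complex C d" and "chain_complex D e"
    and "deformation_retract C d D e Psi Phi h"
  shows "\<exists>(I :: nat \<Rightarrow> nat set) (S :: nat \<Rightarrow> 'v set) (M :: (nat \<times> nat) set).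
           based_complex C d I S \<and> morse_matching d I S M \<and>
           (\<exists>f g. chain_iso D e (morse_carrier I S M) (morse_bd d I S M) f \<and> chain_iso C d C d g \<and>
              (\<forall>n. \<forall>x\<in>C n. f n (Psi n x) = morse_Psi d I S M n (g n x)) \<and>
              (\<forall>n. \<forall>y\<in>D n. g n (Phi n y) = morse_Phi d I S M n (f n y)))"
proof -
  interpret chain_deformation_retract C d D e Psi Phi h
    using assms by unfold_locales
  have "\<forall>n. \<forall>y\<in>D n. Phi n y = morse_Phi d cells summand matching n (Phi n y)"
    using morse_Phi_A by (simp add: A_def)
  moreover have "\<forall>n. \<forall>x\<in>C n. Phi n (Psi n x) = morse_Psi d cells summand matching n x"
    using morse_Psi_eq by simp
  ultimately show ?thesis
    using based_complex_cells morse_matching_cells chain_iso_Phi_morse chain_iso_id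
    by (intro exI[of _ cells] exI[of _ summand] exI[of _ matching] exI[of _ Phi] exI[of _ "\<lambda>n x. x"]
        conjI) auto
qed

end
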